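(* Consider Model 1 (the risk-averse insider model) with $N\ge 1$ trading periods, as described in the context. A subgame perfect linear equilibrium exists. In this equilibrium there are real numbers $\beta_n,\lambda_n,\alpha_n,\delta_n,\Sigma_n$ such that for $n=1,\dots,N$: $x_n=\beta_n(v-p_{n-1})$, $p_n-p_{n-1}=\lambda_n y_n$, $\Sigma_n=\operatorname{Var}(v\mid y_1,\dots,y_n)$, and $$E\Big(\sum_{k=n}^N\pi_k\,\Big|\,p_1,\dots,p_{n-1},v\Big)=\alpha_{n-1}(v-p_{n-1})^2+\delta_{n-1},$$ where $$\delta_n=a_n\sigma_u\Delta t_N^{1/2}\Sigma_n^{1/2},\quad \alpha_n=b_n\sigma_u\Delta t_N^{1/2}\Sigma_n^{-1/2}\quad(n=0,1,\dots,N-1),\qquad \beta_n=c_n\sigma_u\Delta t_N^{1/2}\Sigma_{n-1}^{-1/2}\quad(n=1,\dots,N),$$ and the sequences $\{a_n\},\{b_n\},\{c_n\}$, with terminal values $a_{N-1}=0$, $b_{N-1}=\tfrac12$, $c_N=1$, satisfy for $n=1,\dots,N-1$ the recursion $$a_{n-1}=a_n\Big(\frac{1}{c_n^2+1}\Big)^{1/2}+b_n\Big(\frac{1}{c_n^2+1}\Big)^{3/2}c_n^2,\qquad b_{n-1}=b_n\Big(\frac{1}{c_n^2+1}\Big)^{3/2}+\frac{c_n}{c_n^2+1},\qquad c_n=\Big(\frac{2b_n-a_n}{a_n+b_n}\Big)^{1/2},$$ with $c_n>0$ for $n=1,\dots,N$.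
   Context: Model. Fix an integer $N\ge1$ and put $\Delta t_N=1/N$. A risky asset has liquidation value $v\sim N(p_0,\Sigma_0)$ with $\Sigma_0=\sigma_v^2>0$. In each period $n=1,\dots,N$ noise traders submit $u_n\sim N(0,\sigma_u^2\Delta t_N)$ ($\sigma_u>0$), the $u_n$ i.i.d. and independent of $v$. The insider knows $v$ and submits an order $x_n=\beta_n(v-p_{n-1})$ with $\beta_n\in\mathbb R$ (this is the insider's strategy space). The market maker observes the total order $y_n=x_n+u_n$ and sets the price $p_n=E[v\mid y_1,\dots,y_n]$ (semi-strong market efficiency). The insider's profit in period $n$ is $\pi_n=x_n(v-p_n)$, and $\Sigma_n=\operatorname{Var}(v\mid y_1,\dots,y_n)$. For such strategies, with $\lambda_n=\beta_n\Sigma_{n-1}/(\beta_n^2\Sigma_{n-1}+\sigma_u^2\Delta t_N)$ one has $p_n-p_{n-1}=\lambda_ny_n$ and $\Sigma_n=\Sigma_{n-1}\sigma_u^2\Delta t_N/(\beta_n^2\Sigma_{n-1}+\sigma_u^2\Delta t_N)$, and $E(\sum_{k=n}^N\pi_k\mid p_1,\dots,p_{n-1},v)=\alpha_{n-1}(v-p_{n-1})^2+\delta_{n-1}$ with $\alpha_N=\delta_N=0$, $\alpha_{n-1}=\alpha_n(1-\lambda_n\beta_n)^2+\beta_n(1-\lambda_n\beta_n)$, $\delta_{n-1}=\delta_n+\alpha_n\lambda_n^2\sigma_u^2\Delta t_N$. Here $\alpha_{n-1}(v-p_{n-1})^2$ is the "risky profit" and $\delta_{n-1}$ the "guaranteed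 profit". Equilibrium. An insider strategy specifies, for each period $n$ and each value $\Sigma_{n-1}>0$ of the current conditional variance, an intensity $\beta_n$. Given the strategy for periods $n+1,\dots,N$, each choice of $\beta_n$ determines (through the formulas above, with later intensities given by the strategy applied to the resulting conditional variances) $\alpha_{n-1}$ and $\delta_{n-1}$ as functions of $\beta_n$ and $\Sigma_{n-1}$. A subgame perfect (linear) equilibrium of Model 1 is a strategy such that for every $n$ and every $\Sigma_{n-1}>0$ the prescribed $\beta_n$ first maximizes the guaranteed profit $\delta_{n-1}$ over $\beta_n\in\mathbb R$, and, among the maximizers of $\delta_{n-1}$, maximizes the risky profit $\alpha_{n-1}(v-p_{n-1})^2$ (i.e. maximizes $\alpha_{n-1}$), with the market maker pricing efficiently given this strategy. *)

theory Defs
  imports Complex_Main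
begin

text \<open>An insider strategy
  str n S gives the intensity beta_n used in period n when the current conditional
  variance is Sigma_{n-1} = S.\<close>

definition dtN :: "nat \<Rightarrow> real" where
  "dtN N = 1 / real N"

definition lam :: "real \<Rightarrow> nat \<Rightarrow> real \<Rightarrow> real \<Rightarrow> real" where
  "lam su N S b = b * S / (b\<^sup>2 * S + su\<^sup>2 * dtN N)"

definition sig_next :: "real \<Rightarrow> nat \<Rightarrow> real \<Rightarrow> real \<Rightarrow> real" where
  "sig_next su N S b = S * su\<^sup>2 * dtN N / (b\<^sup>2 * S + su\<^sup>2 * dtN N)"

text \<open>cont su N str m S = (alpha_{n-1}, delta_{n-1}) where m = N - n + 1 is the
  number of remaining periods (so the current period is n = N - m + 1), Sigma_{n-1} = S,
  and the insider follows str in periods n..N.  step_val gives the same pair when the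
  current intensity is an arbitrary b and str is followed afterwards.\<close>
fun cont :: "real \<Rightarrow> nat \<Rightarrow> (nat \<Rightarrow> real \<Rightarrow> real) \<Rightarrow> nat \<Rightarrow> real \<Rightarrow> real \<times> real" where
  "cont su N str 0 S = (0, 0)"
| "cont su N str (Suc m) S =
     (let b = str (N - m) S;
          l = lam su N S b;
          (a, d) = cont su N str m (sig_next su N S b)
      in (a * (1 - l * b)\<^sup>2 + b * (1 - l * b), d + a * l\<^sup>2 * su\<^sup>2 * dtN N))"

definition step_val :: "real \<Rightarrow> nat \<Rightarrow> (nat \<Rightarrow> real \<Rightarrow> real) \<Rightarrow> nat \<Rightarrow> real \<Rightarrow> real \<Rightarrow> real \<times> real" where
  "step_val su N str n S b =
     (let l = lam su N S b;
          (a, d) = cont su N str (N - n) (sig_next su N S b)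
      in (a * (1 - l * b)\<^sup>2 + b * (1 - l * b), d + a * l\<^sup>2 * su\<^sup>2 * dtN N))"

definition is_SPE :: "real \<Rightarrow> nat \<Rightarrow> (nat \<Rightarrow> real \<Rightarrow> real) \<Rightarrow> bool" where
  "is_SPE su N str \<longleftrightarrow>
     (\<forall>n \<in> {1..N}. \<forall>S > 0.
        (\<forall>b. snd (step_val su N str n S b) \<le> snd (step_val su N str n S (str n S))) \<and>
        (\<forall>b. snd (step_val su N str n S b) = snd (step_val su N str n S (str n S)) \<longrightarrow>
              fst (step_val su N str n S b) \<le> fst (step_val su N str n S (str n S))))"

fun sig_path :: "real \<Rightarrow> nat \<Rightarrow> (nat \<Rightarrow> real \<Rightarrow> real) \<Rightarrow> real \<Rightarrow> nat \<Rightarrow> real" where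
  "sig_path su N str S0 0 = S0"
| "sig_path su N str S0 (Suc n) =
     sig_next su N (sig_path su N str S0 n) (str (Suc n) (sig_path su N str S0 n))"

end

theory Submission
  imports Defs
begin

text \<open>Scale invariance: if the continuation values after period n are
  alpha_n = B sigma / sqrt Sigma_n and delta_n = A sigma sqrt Sigma_n, with sigma = su sqrt dt,
  then the intensity beta_n = c sigma / sqrt Sigma_(n-1) produces values of the same form
  whose coefficients depend only on A, B and the normalized intensity c.  With
  s = (c^2 + 1)^(-1/2), the new guaranteed coefficient is the cubic (A + B) s - B s^3, which is
  maximal exactly when 3 B s^2 = A + B, i.e. c^2 = (2B - A)/(A + B); the tie-break on the risky
  coefficient selects the positive root.  The invariant 0 <= A < 2B propagates backwards from
  the last period, so this choice is well defined and positive in every period.\<close>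

text \<open>For the normalized intensity c = beta_n sqrt Sigma_(n-1) / (su sqrt dt) one has
  shrink c = sqrt (Sigma_n / Sigma_(n-1)), and guaranteed_gain a_n b_n c_n and risky_gain b_n c_n
  are the right-hand sides of the recursions for a_(n-1) and b_(n-1).\<close>

definition shrink :: "real \<Rightarrow> real" where
  "shrink c = sqrt (1 / (c\<^sup>2 + 1))"

definition guaranteed_gain :: "real \<Rightarrow> real \<Rightarrow> real \<Rightarrow> real" where
  "guaranteed_gain A B c = A * shrink c + B * shrink c ^ 3 * c\<^sup>2"

definition risky_gain :: "real \<Rightarrow> real \<Rightarrow> real" where
  "risky_gain B c = B * shrink c ^ 3 + c / (c\<^sup>2 + 1)"

lemma sq_plus_one_pos: "0 < (c::real)\<^sup>2 + 1"
  by (simp add: add_nonneg_pos)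

lemma shrink_pos: "0 < shrink c"
  by (simp add: shrink_def sq_plus_one_pos)

lemma shrink_sq: "shrink c ^ 2 = 1 / (c\<^sup>2 + 1)"
  by (simp add: shrink_def sq_plus_one_pos less_imp_le)

lemma shrink_cube_mult: "shrink c ^ 3 * (c\<^sup>2 + 1) = shrink c"
proof -
  have "shrink c ^ 3 * (c\<^sup>2 + 1) = shrink c * (shrink c ^ 2 * (c\<^sup>2 + 1))"
    by (simp add: power3_eq_cube power2_eq_square)
  also have "\<dots> = shrink c"
    using sq_plus_one_pos[of c] by (simp add: shrink_sq)
  finally show ?thesis .
qed

lemma guaranteed_gain_alt: "guaranteed_gain A B c = (A + B) * shrink c - B * shrink c ^ 3"
proof -
  have "B * shrink c ^ 3 * c\<^sup>2 = B * (shrink c ^ 3 * (c\<^sup>2 + 1)) - B * shrink c ^ 3"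
    by (simp add: algebra_simps)
  also have "\<dots> = B * shrink c - B * shrink c ^ 3"
    by (simp add: shrink_cube_mult)
  finally show ?thesis
    by (simp add: guaranteed_gain_def algebra_simps)
qed

lemma shrink_eq_iff_abs_eq: "shrink c = shrink c' \<longleftrightarrow> \<bar>c\<bar> = \<bar>c'\<bar>"
proof
  assume "shrink c = shrink c'"
  then have "c\<^sup>2 + 1 = c'\<^sup>2 + 1"
    using shrink_sq[of c] shrink_sq[of c'] sq_plus_one_pos[of c] sq_plus_one_pos[of c']
    by (simp add: field_simps)
  then show "\<bar>c\<bar> = \<bar>c'\<bar>"
    by (metis add_right_cancel real_sqrt_abs)
qed (simp add: shrink_def, metis power2_abs)

lemma frac_le_half: "(c::real) / (c\<^sup>2 + 1) \<le> 1 / 2"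
proof -
  have "2 * c \<le> c\<^sup>2 + 1"
    using zero_le_power2[of "c - 1"] by (simp add: power2_eq_square algebra_simps)
  then show ?thesis
    using sq_plus_one_pos[of c] by (simp add: field_simps)
qed

lemma risky_gain_zero_le: "risky_gain 0 c \<le> risky_gain 0 1"
  using frac_le_half[of c] by (simp add: risky_gain_def)

definition opt_intensity :: "real \<Rightarrow> real \<Rightarrow> real" where
  "opt_intensity A B = sqrt ((2 * B - A) / (A + B))"

lemma opt_intensity_pos:
  assumes "0 \<le> A" "A < 2 * B"
  shows "0 < opt_intensity A B"
  using assms by (simp add: opt_intensity_def)

lemma shrink_opt_intensity_sq:
  assumes "0 \<le> A" "A < 2 * B"
  shows "3 * B * shrink (opt_intensity A B) ^ 2 = A + B"
proof -
  have "opt_intensity A B ^ 2 + 1 = 3 * B / (A + B)"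
    using assms by (simp add: opt_intensity_def field_simps)
  then show ?thesis
    using assms by (simp add: shrink_sq)
qed

lemma guaranteed_gain_opt:
  assumes "0 \<le> A" "A < 2 * B"
  shows "guaranteed_gain A B (opt_intensity A B) = 2 * B * shrink (opt_intensity A B) ^ 3"
  unfolding guaranteed_gain_alt shrink_opt_intensity_sq[OF assms, symmetric]
  by (simp add: power2_eq_square power3_eq_cube algebra_simps)

lemma guaranteed_gain_gap:
  assumes "0 \<le> A" "A < 2 * B"
  defines "s0 \<equiv> shrink (opt_intensity A B)"
  shows "guaranteed_gain A B (opt_intensity A B) - guaranteed_gain A B c
           = B * (s0 - shrink c)\<^sup>2 * (2 * s0 + shrink c)"
  unfolding guaranteed_gain_alt shrink_opt_intensity_sq[OF assms(1,2), symmetric] s0_def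
  by (simp add: power2_eq_square power3_eq_cube algebra_simps)

lemma guaranteed_gain_le_opt:
  assumes "0 \<le> A" "A < 2 * B"
  shows "guaranteed_gain A B c \<le> guaranteed_gain A B (opt_intensity A B)"
proof -
  have "0 \<le> B * (shrink (opt_intensity A B) - shrink c)\<^sup>2 * (2 * shrink (opt_intensity A B) + shrink c)"
    using assms shrink_pos[of c] shrink_pos[of "opt_intensity A B"] by simp
  then show ?thesis
    using guaranteed_gain_gap[OF assms, of c] by linarith
qed

lemma risky_gain_le_opt:
  assumes "0 \<le> A" "A < 2 * B"
    and "guaranteed_gain A B c = guaranteed_gain A B (opt_intensity A B)"
  shows "risky_gain B c \<le> risky_gain B (opt_intensity A B)"
proof -
  let ?c0 = "opt_intensity A B"
  have "B * (2 * shrink ?c0 + shrink c) \<noteq> 0"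
    using assms shrink_pos[of c] shrink_pos[of ?c0] by (simp add: add_pos_pos)
  then have "shrink c = shrink ?c0"
    using guaranteed_gain_gap[OF assms(1,2), of c] assms(3) by simp
  then have "\<bar>c\<bar> = ?c0"
    using opt_intensity_pos[OF assms(1,2)] by (simp add: shrink_eq_iff_abs_eq)
  then have "c / (c\<^sup>2 + 1) \<le> ?c0 / (?c0\<^sup>2 + 1)"
    by (metis abs_ge_self divide_right_mono power2_abs sq_plus_one_pos less_imp_le)
  then show ?thesis
    using \<open>shrink c = shrink ?c0\<close> by (simp add: risky_gain_def)
qed

text \<open>The coefficients are indexed by the number k = N - n of remaining periods:
  a_n = a_coeff (N - n), and likewise for b and c.  With nothing left after the last period,
  (2B - A)/(A + B) degenerates to 0/0 there, so c_N = 1, the maximizer of c/(c^2 + 1), is set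
  separately.\<close>

definition intensity_coeff :: "nat \<Rightarrow> real \<Rightarrow> real \<Rightarrow> real" where
  "intensity_coeff k A B = (if k = 0 then 1 else opt_intensity A B)"

fun profit_coeffs :: "nat \<Rightarrow> real \<times> real" where
  "profit_coeffs 0 = (0, 0)"
| "profit_coeffs (Suc k) =
     (let (A, B) = profit_coeffs k; c = intensity_coeff k A B
      in (guaranteed_gain A B c, risky_gain B c))"

definition a_coeff :: "nat \<Rightarrow> real" where
  "a_coeff k = fst (profit_coeffs k)"

definition b_coeff :: "nat \<Rightarrow> real" where
  "b_coeff k = snd (profit_coeffs k)"

definition c_coeff :: "nat \<Rightarrow> real" where
  "c_coeff k = intensity_coeff k (a_coeff k) (b_coeff k)"

lemma coeffs_Suc:
  "a_coeff (Suc k) = guaranteed_gain (a_coeff k) (b_coeff k) (c_coeff k)"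
  "b_coeff (Suc k) = risky_gain (b_coeff k) (c_coeff k)"
  by (simp_all add: a_coeff_def b_coeff_def c_coeff_def split_beta Let_def)

lemma coeffs_terminal:
  "a_coeff 0 = 0" "b_coeff 0 = 0" "c_coeff 0 = 1" "a_coeff 1 = 0" "b_coeff 1 = 1 / 2"
  by (simp_all add: a_coeff_def b_coeff_def c_coeff_def intensity_coeff_def
      guaranteed_gain_def risky_gain_def)

lemma c_coeff_eq_opt_intensity: "0 < k \<Longrightarrow> c_coeff k = opt_intensity (a_coeff k) (b_coeff k)"
  by (simp add: c_coeff_def intensity_coeff_def)

lemma coeffs_admissible: "0 < k \<Longrightarrow> 0 \<le> a_coeff k \<and> a_coeff k < 2 * b_coeff k"
proof (induction k)
  case 0
  then show ?case by simp
next
  case (Suc k)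
  show ?case
  proof (cases "k = 0")
    case True
    then show ?thesis
      using coeffs_terminal by simp
  next
    case False
    let ?A = "a_coeff k" and ?B = "b_coeff k" and ?c = "c_coeff k"
    have adm: "0 \<le> ?A" "?A < 2 * ?B"
      using Suc.IH False by auto
    have c: "?c = opt_intensity ?A ?B"
      using False by (simp add: c_coeff_eq_opt_intensity)
    have A': "a_coeff (Suc k) = 2 * ?B * shrink ?c ^ 3"
      unfolding coeffs_Suc c by (rule guaranteed_gain_opt[OF adm])
    have "2 * b_coeff (Suc k) - a_coeff (Suc k) = 2 * ?c / (?c\<^sup>2 + 1)"
      unfolding A' by (simp add: coeffs_Suc risky_gain_def)
    moreover have "0 < 2 * ?c / (?c\<^sup>2 + 1)"
      using opt_intensity_pos[OF adm] c sq_plus_one_pos[of ?c] by simp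
    moreover have "0 \<le> a_coeff (Suc k)"
      using adm shrink_pos[of ?c] unfolding A' by simp
    ultimately show ?thesis
      by linarith
  qed
qed

lemma c_coeff_pos: "0 < c_coeff k"
  using coeffs_admissible[of k] opt_intensity_pos
  by (cases "k = 0") (simp_all add: coeffs_terminal c_coeff_eq_opt_intensity)

lemma c_coeff_maximizes_guaranteed_gain:
  "guaranteed_gain (a_coeff k) (b_coeff k) c \<le> guaranteed_gain (a_coeff k) (b_coeff k) (c_coeff k)"
  using coeffs_admissible[of k] guaranteed_gain_le_opt
  by (cases "k = 0") (simp_all add: coeffs_terminal c_coeff_eq_opt_intensity guaranteed_gain_def)

lemma c_coeff_maximizes_risky_gain:
  assumes "guaranteed_gain (a_coeff k) (b_coeff k) c = guaranteed_gain (a_coeff k) (b_coeff k) (c_coeff k)"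
  shows "risky_gain (b_coeff k) c \<le> risky_gain (b_coeff k) (c_coeff k)"
proof (cases "k = 0")
  case True
  then show ?thesis
    using risky_gain_zero_le by (simp add: coeffs_terminal)
next
  case False
  then show ?thesis
    using coeffs_admissible[of k] risky_gain_le_opt assms by (simp add: c_coeff_eq_opt_intensity)
qed

definition period_update :: "real \<Rightarrow> nat \<Rightarrow> real \<Rightarrow> real \<Rightarrow> real \<times> real \<Rightarrow> real \<times> real" where
  "period_update su N S b v =
     (let l = lam su N S b
      in (fst v * (1 - l * b)\<^sup>2 + b * (1 - l * b), snd v + fst v * l\<^sup>2 * su\<^sup>2 * dtN N))"

lemma cont_Suc_eq_period_update:
  "cont su N str (Suc m) S =
     period_update su N S (str (N - m) S) (cont su N str m (sig_next su N S (str (N - m) S)))"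
  by (simp add: period_update_def Let_def split_beta)

lemma step_val_eq_period_update:
  "step_val su N str n S b = period_update su N S b (cont su N str (N - n) (sig_next su N S b))"
  by (simp add: step_val_def period_update_def Let_def split_beta)

lemma dtN_pos: "1 \<le> N \<Longrightarrow> 0 < dtN N"
  by (simp add: dtN_def)

lemma sig_next_pos:
  assumes "0 < su" "1 \<le> N" "0 < S"
  shows "0 < sig_next su N S b"
proof -
  have "0 < b\<^sup>2 * S + su\<^sup>2 * dtN N"
    using assms dtN_pos[OF assms(2)] by (simp add: add_nonneg_pos)
  then show ?thesis
    using assms dtN_pos[OF assms(2)] by (simp add: sig_next_def)
qed

lemma sig_path_pos:
  assumes "0 < su" "1 \<le> N" "0 < S0"
  shows "0 < sig_path su N str S0 n"
  by (induction n) (simp_all add: assms(3) sig_next_pos[OF assms(1,2)])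

lemma update_terms_normalized:
  fixes b :: real
  assumes "0 < su" "1 \<le> N" "0 < S"
  defines "\<sigma> \<equiv> su * sqrt (dtN N)"
  defines "c \<equiv> b * sqrt S / \<sigma>"
  shows "sig_next su N S b = S * shrink c ^ 2"
    and "1 - lam su N S b * b = shrink c ^ 2"
    and "lam su N S b ^ 2 * su\<^sup>2 * dtN N = c\<^sup>2 * S * shrink c ^ 4"
proof -
  have \<sigma>_pos: "0 < \<sigma>"
    using assms(1) dtN_pos[OF assms(2)] by (simp add: \<sigma>_def)
  have \<sigma>_sq: "\<sigma>\<^sup>2 = su\<^sup>2 * dtN N"
    using dtN_pos[OF assms(2)] by (simp add: \<sigma>_def power_mult_distrib)
  have b_sq: "b\<^sup>2 * S = c\<^sup>2 * \<sigma>\<^sup>2"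
    using assms(3) \<sigma>_pos by (simp add: c_def power_divide power_mult_distrib)
  have D_pos: "0 < c\<^sup>2 + 1"
    by (rule sq_plus_one_pos)
  have den: "b\<^sup>2 * S + su\<^sup>2 * dtN N = \<sigma>\<^sup>2 * (c\<^sup>2 + 1)"
    using b_sq \<sigma>_sq by (simp add: algebra_simps)
  have l: "lam su N S b = b * S / (\<sigma>\<^sup>2 * (c\<^sup>2 + 1))"
    by (simp add: lam_def den)
  have l_normalized: "lam su N S b = c * sqrt S / (\<sigma> * (c\<^sup>2 + 1))"
  proof -
    have "b * S = b * (sqrt S * sqrt S)"
      using assms(3) by simp
    also have "\<dots> = c * \<sigma> * sqrt S"
      using \<sigma>_pos by (simp add: c_def)
    finally show ?thesis
      using \<sigma>_pos by (simp add: l power2_eq_square)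
  qed
  show "sig_next su N S b = S * shrink c ^ 2"
    using assms(1) dtN_pos[OF assms(2)] D_pos by (simp add: sig_next_def den \<sigma>_sq shrink_sq)
  have "lam su N S b * b = b\<^sup>2 * S / (\<sigma>\<^sup>2 * (c\<^sup>2 + 1))"
    by (simp add: l power2_eq_square)
  also have "\<dots> = c\<^sup>2 / (c\<^sup>2 + 1)"
    using \<sigma>_pos by (simp add: b_sq)
  finally have "lam su N S b * b = c\<^sup>2 / (c\<^sup>2 + 1)" .
  then show "1 - lam su N S b * b = shrink c ^ 2"
    using D_pos by (simp add: shrink_sq field_simps)
  have "lam su N S b ^ 2 * su\<^sup>2 * dtN N = lam su N S b ^ 2 * \<sigma>\<^sup>2"
    by (simp add: \<sigma>_sq mult.assoc)
  also have "\<dots> = c\<^sup>2 * S * (1 / (c\<^sup>2 + 1))\<^sup>2"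
    using \<sigma>_pos assms(3) by (simp add: l_normalized power_mult_distrib power_divide)
  finally show "lam su N S b ^ 2 * su\<^sup>2 * dtN N = c\<^sup>2 * S * shrink c ^ 4"
    by (simp add: shrink_sq[symmetric] flip: power_mult)
qed

lemma period_update_scaled:
  fixes b A B :: real
  assumes "0 < su" "1 \<le> N" "0 < S"
  defines "\<sigma> \<equiv> su * sqrt (dtN N)"
  defines "c \<equiv> b * sqrt S / \<sigma>"
  shows "period_update su N S b (B * \<sigma> / sqrt (sig_next su N S b), A * \<sigma> * sqrt (sig_next su N S b))
           = (\<sigma> / sqrt S * risky_gain B c, \<sigma> * sqrt S * guaranteed_gain A B c)"
proof -
  note terms = update_terms_normalized[OF assms(1-3), of b, folded \<sigma>_def, folded c_def]
  define s where "s = shrink c"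
  have s_pos: "0 < s"
    by (simp add: s_def shrink_pos)
  have \<sigma>_pos: "0 < \<sigma>"
    using assms(1) dtN_pos[OF assms(2)] by (simp add: \<sigma>_def)
  have sqrt_S: "0 < sqrt S" "sqrt S * sqrt S = S"
    using assms(3) by simp_all
  have sqrt_sig_next: "sqrt (sig_next su N S b) = sqrt S * s"
    using s_pos by (simp add: terms(1) real_sqrt_mult s_def)
  have b_eq: "b = c * \<sigma> / sqrt S"
    using \<sigma>_pos sqrt_S by (simp add: c_def)
  have frac: "c / (c\<^sup>2 + 1) = c * s ^ 2"
    by (simp add: s_def shrink_sq)
  have "B * \<sigma> / (sqrt S * s) * (s ^ 2)\<^sup>2 + b * s ^ 2 = \<sigma> / sqrt S * (B * s ^ 3 + c * s ^ 2)"
    using s_pos sqrt_S by (simp add: b_eq field_simps power2_eq_square power3_eq_cube)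
  moreover have "A * \<sigma> * (sqrt S * s) + B * \<sigma> / (sqrt S * s) * lam su N S b ^ 2 * su\<^sup>2 * dtN N
                   = \<sigma> * sqrt S * (A * s + B * s ^ 3 * c\<^sup>2)"
  proof -
    have "B * \<sigma> / (sqrt S * s) * lam su N S b ^ 2 * su\<^sup>2 * dtN N
            = B * \<sigma> / (sqrt S * s) * (c\<^sup>2 * (sqrt S * sqrt S) * s ^ 4)"
      by (simp only: mult.assoc terms(3)[folded s_def, unfolded mult.assoc] sqrt_S(2))
    also have "\<dots> = \<sigma> * sqrt S * (B * s ^ 3 * c\<^sup>2)"
      using s_pos sqrt_S(1) by (simp add: field_simps power3_eq_cube power4_eq_xxxx)
    finally show ?thesis
      by (simp add: algebra_simps)
  qed
  ultimately show ?thesis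
    unfolding period_update_def Let_def terms(2)
    by (simp add: sqrt_sig_next risky_gain_def guaranteed_gain_def frac flip: s_def)
qed

definition eq_strategy :: "real \<Rightarrow> nat \<Rightarrow> nat \<Rightarrow> real \<Rightarrow> real" where
  "eq_strategy su N n S = c_coeff (N - n) * su * sqrt (dtN N) / sqrt S"

lemma eq_strategy_normalized:
  assumes "0 < su" "1 \<le> N" "0 < S"
  shows "eq_strategy su N n S * sqrt S / (su * sqrt (dtN N)) = c_coeff (N - n)"
  using assms dtN_pos[OF assms(2)] by (simp add: eq_strategy_def)

lemma cont_eq_strategy:
  assumes "0 < su" "1 \<le> N"
  defines "\<sigma> \<equiv> su * sqrt (dtN N)"
  shows "k \<le> N \<Longrightarrow> 0 < S \<Longrightarrow>
           cont su N (eq_strategy su N) k S = (b_coeff k * \<sigma> / sqrt S, a_coeff k * \<sigma> * sqrt S)"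
proof (induction k arbitrary: S)
  case 0
  then show ?case
    by (simp add: coeffs_terminal)
next
  case (Suc m)
  let ?b = "eq_strategy su N (N - m) S"
  have "m = N - (N - m)"
    using Suc.prems(1) by simp
  then have c: "?b * sqrt S / \<sigma> = c_coeff m"
    using eq_strategy_normalized[OF assms(1,2) Suc.prems(2)] by (simp add: \<sigma>_def)
  have "cont su N (eq_strategy su N) (Suc m) S
          = period_update su N S ?b (cont su N (eq_strategy su N) m (sig_next su N S ?b))"
    by (rule cont_Suc_eq_period_update)
  also have "\<dots> = period_update su N S ?b
      (b_coeff m * \<sigma> / sqrt (sig_next su N S ?b), a_coeff m * \<sigma> * sqrt (sig_next su N S ?b))"
    using Suc sig_next_pos[OF assms(1,2) Suc.prems(2)] by simp
  also have "\<dots> = (\<sigma> / sqrt S * risky_gain (b_coeff m) (c_coeff m),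
                   \<sigma> * sqrt S * guaranteed_gain (a_coeff m) (b_coeff m) (c_coeff m))"
    using period_update_scaled[OF assms(1,2) Suc.prems(2), of ?b, folded \<sigma>_def, unfolded c] .
  also have "\<dots> = (b_coeff (Suc m) * \<sigma> / sqrt S, a_coeff (Suc m) * \<sigma> * sqrt S)"
    by (simp add: coeffs_Suc ac_simps)
  finally show ?case .
qed

lemma step_val_eq_strategy:
  assumes "0 < su" "1 \<le> N" "0 < S"
  defines "\<sigma> \<equiv> su * sqrt (dtN N)"
  shows "step_val su N (eq_strategy su N) n S b
           = (\<sigma> / sqrt S * risky_gain (b_coeff (N - n)) (b * sqrt S / \<sigma>),
              \<sigma> * sqrt S * guaranteed_gain (a_coeff (N - n)) (b_coeff (N - n)) (b * sqrt S / \<sigma>))"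
proof -
  have "cont su N (eq_strategy su N) (N - n) (sig_next su N S b)
          = (b_coeff (N - n) * \<sigma> / sqrt (sig_next su N S b),
             a_coeff (N - n) * \<sigma> * sqrt (sig_next su N S b))"
    using cont_eq_strategy[OF assms(1,2)] sig_next_pos[OF assms(1-3)] by (simp add: \<sigma>_def)
  then show ?thesis
    using period_update_scaled[OF assms(1-3), of b, folded \<sigma>_def]
    by (simp only: step_val_eq_period_update)
qed

theorem is_SPE_eq_strategy:
  assumes "0 < su" "1 \<le> N"
  shows "is_SPE su N (eq_strategy su N)"
  unfolding is_SPE_def
proof (intro ballI allI impI conjI)
  fix n S b
  assume S: "0 < (S::real)"
  define \<sigma> where "\<sigma> = su * sqrt (dtN N)"
  let ?k = "N - n" and ?v = "step_val su N (eq_strategy su N) n S"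
  have scale_pos: "0 < \<sigma> * sqrt S" "0 < \<sigma> / sqrt S"
    using assms S dtN_pos[OF assms(2)] by (simp_all add: \<sigma>_def)
  have val_b: "?v b = (\<sigma> / sqrt S * risky_gain (b_coeff ?k) (b * sqrt S / \<sigma>),
      \<sigma> * sqrt S * guaranteed_gain (a_coeff ?k) (b_coeff ?k) (b * sqrt S / \<sigma>))"
    using step_val_eq_strategy[OF assms S] by (simp add: \<sigma>_def)
  have val_eq: "?v (eq_strategy su N n S) = (\<sigma> / sqrt S * risky_gain (b_coeff ?k) (c_coeff ?k),
      \<sigma> * sqrt S * guaranteed_gain (a_coeff ?k) (b_coeff ?k) (c_coeff ?k))"
    using step_val_eq_strategy[OF assms S] eq_strategy_normalized[OF assms S] by (simp add: \<sigma>_def)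
  show "snd (?v b) \<le> snd (?v (eq_strategy su N n S))"
    unfolding val_b val_eq using scale_pos(1) c_coeff_maximizes_guaranteed_gain
    by (simp add: mult_left_mono)
  assume "snd (?v b) = snd (?v (eq_strategy su N n S))"
  then have "guaranteed_gain (a_coeff ?k) (b_coeff ?k) (b * sqrt S / \<sigma>)
               = guaranteed_gain (a_coeff ?k) (b_coeff ?k) (c_coeff ?k)"
    unfolding val_b val_eq using scale_pos(1) by auto
  then show "fst (?v b) \<le> fst (?v (eq_strategy su N n S))"
    unfolding val_b val_eq fst_conv
    by (rule mult_left_mono[OF c_coeff_maximizes_risky_gain less_imp_le[OF scale_pos(2)]])
qed

theorem theorem1:
  fixes su sv :: real and N :: nat
  assumes "N \<ge> 1" and "su > 0" and "sv > 0"
  shows "\<exists>str. is_SPE su N str \<and>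
    (let Sig = sig_path su N str (sv\<^sup>2);
         beta = (\<lambda>n. str n (Sig (n - 1)));
         alpha = (\<lambda>n. fst (cont su N str (N - n) (Sig n)));
         delta = (\<lambda>n. snd (cont su N str (N - n) (Sig n)))
     in \<exists>a b c :: nat \<Rightarrow> real.
          a (N - 1) = 0 \<and> b (N - 1) = 1 / 2 \<and> c N = 1 \<and>
          (\<forall>n \<in> {1..N}. c n > 0) \<and>
          (\<forall>n \<in> {1..N - 1}.
             a (n - 1) = a n * sqrt (1 / ((c n)\<^sup>2 + 1))
                         + b n * (sqrt (1 / ((c n)\<^sup>2 + 1))) ^ 3 * (c n)\<^sup>2 \<and>
             b (n - 1) = b n * (sqrt (1 / ((c n)\<^sup>2 + 1))) ^ 3 + c n / ((c n)\<^sup>2 + 1) \<and>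
             c n = sqrt ((2 * b n - a n) / (a n + b n))) \<and>
          (\<forall>n < N. delta n = a n * su * sqrt (dtN N) * sqrt (Sig n) \<and>
                   alpha n = b n * su * sqrt (dtN N) / sqrt (Sig n)) \<and>
          (\<forall>n \<in> {1..N}. beta n = c n * su * sqrt (dtN N) / sqrt (Sig (n - 1))))"
proof -
  let ?str = "eq_strategy su N"
  define Sig where "Sig = sig_path su N ?str (sv\<^sup>2)"
  have Sig_pos: "0 < Sig n" for n
    unfolding Sig_def using sig_path_pos assms by simp
  define a b c where "a n = a_coeff (N - n)" and "b n = b_coeff (N - n)" and "c n = c_coeff (N - n)"
    for n
  have recursion: "a (n - 1) = a n * sqrt (1 / ((c n)\<^sup>2 + 1))
                                 + b n * (sqrt (1 / ((c n)\<^sup>2 + 1))) ^ 3 * (c n)\<^sup>2 \<and>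
                   b (n - 1) = b n * (sqrt (1 / ((c n)\<^sup>2 + 1))) ^ 3 + c n / ((c n)\<^sup>2 + 1) \<and>
                   c n = sqrt ((2 * b n - a n) / (a n + b n))" if "n \<in> {1..N - 1}" for n
  proof -
    from that have "N - (n - 1) = Suc (N - n)" and "0 < N - n"
      by auto
    then show ?thesis
      by (simp add: a_def b_def c_def coeffs_Suc c_coeff_eq_opt_intensity opt_intensity_def
          guaranteed_gain_def risky_gain_def shrink_def)
  qed
  have value_coeffs: "snd (cont su N ?str (N - n) (Sig n)) = a n * su * sqrt (dtN N) * sqrt (Sig n) \<and>
                fst (cont su N ?str (N - n) (Sig n)) = b n * su * sqrt (dtN N) / sqrt (Sig n)" for n
    using cont_eq_strategy[OF assms(2,1) _ Sig_pos] by (simp add: a_def b_def mult.assoc)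
  have intensities: "?str n (Sig (n - 1)) = c n * su * sqrt (dtN N) / sqrt (Sig (n - 1))" for n
    by (simp add: eq_strategy_def c_def)
  have terminal: "a (N - 1) = 0 \<and> b (N - 1) = 1 / 2 \<and> c N = 1"
    using assms(1) coeffs_terminal by (simp add: a_def b_def c_def)
  have c_pos: "0 < c n" for n
    by (simp add: c_def c_coeff_pos)
  show ?thesis
    using is_SPE_eq_strategy[OF assms(2,1)] terminal c_pos recursion value_coeffs intensities
    unfolding Sig_def by (intro exI[of _ ?str]) (simp only: Let_def, blast)
qed

end
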